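(* Let $n$ be a positive integer with $n > 6\log 10$, and let $\Delta > 0$. Let $q$ be the random score taking values in $\{0,1,\dots,n\}$ with $\Pr[q = i] = \frac{\binom{n}{i}\exp\left(\frac{i\epsilon}{2\Delta}\right)}{\left(1+\exp\left(\frac{\epsilon}{2\Delta}\right)\right)^n}$, and let the number of flipped labels be $n - q$. If $\epsilon \ge 2\Delta\log\frac{1+2\sqrt{(1.5\log 10)/n}}{1-2\sqrt{(1.5\log 10)/n}}$, then $\Pr[n - q \le n/2] \ge 0.999$, i.e. with probability at least $99.9\%$ the flipping rate is at most $1/2$.
   Context: This is the distribution of the Hamming-agreement score $q(D,D^* ) = n - |\{i : y_i \ne y^*_i\}|$ when an exponential mechanism with privacy budget $\epsilon$ and sensitivity $\Delta$ outputs a binary label vector $D$ for a true label vector $D^*$ of length $n$, each output $D$ having probability proportional to $\exp(q(D,D^* )\epsilon/(2\Delta))$; $n-q$ is the number of labels changed. $\log$ denotes the natural logarithm. *)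

theory Defs
  imports Complex_Main
begin

text \<open>Probability mass of the Hamming-agreement score q = i under the exponential
mechanism on binary label vectors of length n.\<close>
definition score_prob :: "nat \<Rightarrow> real \<Rightarrow> real \<Rightarrow> nat \<Rightarrow> real" where
  "score_prob n \<epsilon> \<Delta> i =
     real (n choose i) * exp (real i * \<epsilon> / (2 * \<Delta>)) / (1 + exp (\<epsilon> / (2 * \<Delta>))) ^ n"

definition score_event_prob :: "nat \<Rightarrow> real \<Rightarrow> real \<Rightarrow> (nat \<Rightarrow> bool) \<Rightarrow> real" where
  "score_event_prob n \<epsilon> \<Delta> P = (\<Sum>i\<in>{i\<in>{0..n}. P i}. score_prob n \<epsilon> \<Delta> i)"

end

theory Submission
  imports Defs "HOL-Probability.Probability"
begin

text \<open>Under the exponential mechanism with the Hamming-agreement score the labels are kept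
independently, each with probability \<open>e/(1+e)\<close> where \<open>e = exp(\<epsilon>/(2\<Delta>))\<close>, so the score is
binomially distributed. If this keep probability is at least \<open>1/2 + s\<close>, Hoeffding's inequality
bounds the probability that at most half of the labels are kept by \<open>exp(-2ns\<^sup>2)\<close>, and the
choice \<open>s = sqrt(1.5 ln 10 / n)\<close> makes this bound exactly \<open>1/1000\<close>.\<close>

definition label_keep_prob :: "real \<Rightarrow> real \<Rightarrow> real" where
  "label_keep_prob \<epsilon> \<Delta> = exp (\<epsilon> / (2 * \<Delta>)) / (1 + exp (\<epsilon> / (2 * \<Delta>)))"

lemma label_keep_prob_bounds: "label_keep_prob \<epsilon> \<Delta> \<in> {0..1}"
  unfolding label_keep_prob_def by (simp add: add_pos_pos less_imp_le)

lemma score_prob_eq_pmf_binomial: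
  "score_prob n \<epsilon> \<Delta> i = pmf (binomial_pmf n (label_keep_prob \<epsilon> \<Delta>)) i"
proof (cases "i \<le> n")
  case True
  define e where "e = exp (\<epsilon> / (2 * \<Delta>))"
  have e: "e > 0" by (simp add: e_def)
  have "pmf (binomial_pmf n (label_keep_prob \<epsilon> \<Delta>)) i
      = (n choose i) * label_keep_prob \<epsilon> \<Delta> ^ i * (1 - label_keep_prob \<epsilon> \<Delta>) ^ (n - i)"
    using label_keep_prob_bounds[of \<epsilon> \<Delta>] by simp
  also have "\<dots> = (n choose i) * (e / (1 + e)) ^ i * (1 / (1 + e)) ^ (n - i)"
    using e by (simp add: label_keep_prob_def e_def[symmetric] diff_divide_eq_iff)
  also have "\<dots> = (n choose i) * e ^ i / (1 + e) ^ (i + (n - i))"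
    by (simp add: power_divide power_add)
  also have "\<dots> = score_prob n \<epsilon> \<Delta> i"
    using True by (simp add: score_prob_def e_def exp_of_nat_mult[symmetric] mult.commute)
  finally show ?thesis ..
next
  case False
  then show ?thesis
    using label_keep_prob_bounds[of \<epsilon> \<Delta>] by (simp add: score_prob_def binomial_eq_0 not_le)
qed

lemma score_event_prob_eq_prob_binomial:
  "score_event_prob n \<epsilon> \<Delta> P = measure_pmf.prob (binomial_pmf n (label_keep_prob \<epsilon> \<Delta>)) {i. P i}"
proof -
  let ?B = "binomial_pmf n (label_keep_prob \<epsilon> \<Delta>)"
  have "set_pmf ?B \<subseteq> {0..n}"
    using label_keep_prob_bounds by (auto simp: set_pmf_binomial_eq)
  then have "measure_pmf.prob ?B {i. P i} = measure_pmf.prob ?B {i \<in> {0..n}. P i}"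
    by (intro measure_prob_cong_0) (auto simp: set_pmf_eq)
  also have "\<dots> = score_event_prob n \<epsilon> \<Delta> P"
    by (simp add: measure_measure_pmf_finite score_event_prob_def score_prob_eq_pmf_binomial)
  finally show ?thesis ..
qed

lemma prob_binomial_pmf_majority_ge:
  assumes "n > 0" and "0 \<le> s" and "1 / 2 + s \<le> p" and "p \<le> 1"
  shows "1 - exp (-2 * n * s\<^sup>2) \<le> measure_pmf.prob (binomial_pmf n p) {k. real n \<le> 2 * real k}"
proof -
  interpret binomial_distribution n p
    using assms by unfold_locales auto
  let ?B = "binomial_pmf n p"
  have "- {k. real n \<le> 2 * real k} \<subseteq> {k. k / n \<le> p - s}"
  proof
    fix k assume "k \<in> - {k. real n \<le> 2 * real k}"
    then have "real k / n < 1 / 2"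
      using assms(1) by (simp add: field_simps)
    then have "real k / n \<le> p - s"
      using assms(3) by linarith
    then show "k \<in> {k. k / n \<le> p - s}"
      by simp
  qed
  then have "measure_pmf.prob ?B (- {k. real n \<le> 2 * real k})
      \<le> measure_pmf.prob ?B {k. k / n \<le> p - s}"
    by (intro measure_pmf.finite_measure_mono) auto
  also have "\<dots> \<le> exp (-2 * n * s\<^sup>2)"
    using prob_le'[OF assms(1,2)] .
  finally show ?thesis
    using measure_pmf.prob_compl[of "{k. real n \<le> 2 * real k}" ?B] by (simp add: Compl_eq_Diff_UNIV)
qed

lemma logistic_ge_of_ln_ratio_le:
  fixes s x :: real
  assumes "0 \<le> s" and "s < 1 / 2" and "ln ((1 + 2 * s) / (1 - 2 * s)) \<le> x"
  shows "1 / 2 + s \<le> exp x / (1 + exp x)"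
proof -
  have "(1 + 2 * s) / (1 - 2 * s) = exp (ln ((1 + 2 * s) / (1 - 2 * s)))"
    using assms(1,2) by simp
  also have "\<dots> \<le> exp x"
    using assms(3) by simp
  finally have "(1 + 2 * s) / (1 - 2 * s) \<le> exp x" .
  then have "1 + 2 * s \<le> exp x * (1 - 2 * s)"
    using assms(2) by (simp add: field_simps)
  then show ?thesis
    by (simp add: field_simps add_pos_pos)
qed

theorem corollary3:
  fixes n :: nat and \<epsilon> \<Delta> :: real
  assumes "n > 0"
    and "real n > 6 * ln 10"
    and "\<Delta> > 0"
    and "\<epsilon> \<ge> 2 * \<Delta> * ln ((1 + 2 * sqrt (1.5 * ln 10 / real n)) / (1 - 2 * sqrt (1.5 * ln 10 / real n)))"
  shows "score_event_prob n \<epsilon> \<Delta> (\<lambda>q. real n - real q \<le> real n / 2) \<ge> 0.999"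
proof -
  define s where "s = sqrt (1.5 * ln 10 / real n)"
  have s_sq: "s\<^sup>2 = 1.5 * ln 10 / real n" and "0 \<le> s"
    by (simp_all add: s_def)
  have "s < 1 / 2"
    unfolding s_def using assms(1,2) by (intro real_less_lsqrt) (simp_all add: field_simps)
  have "ln ((1 + 2 * s) / (1 - 2 * s)) \<le> \<epsilon> / (2 * \<Delta>)"
    using assms(3,4) by (simp add: s_def field_simps)
  then have keep: "1 / 2 + s \<le> label_keep_prob \<epsilon> \<Delta>"
    unfolding label_keep_prob_def using logistic_ge_of_ln_ratio_le \<open>0 \<le> s\<close> \<open>s < 1 / 2\<close> by blast
  have "exp (-2 * n * s\<^sup>2) = exp (- (3 * ln 10))"
    using assms(1) by (simp add: s_sq)
  also have "\<dots> = 1 / 1000"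
    by (simp add: exp_minus exp_of_nat_mult[of 3 "ln 10", simplified])
  finally have "1 - 1 / 1000 \<le> measure_pmf.prob (binomial_pmf n (label_keep_prob \<epsilon> \<Delta>)) {k. real n \<le> 2 * real k}"
    using prob_binomial_pmf_majority_ge[OF assms(1) \<open>0 \<le> s\<close> keep] label_keep_prob_bounds by simp
  then show ?thesis
    by (simp add: score_event_prob_eq_prob_binomial field_simps)
qed

end
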